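(* Let $\sigma:\mathbb{R}^d\to\mathbb{R}^{d\times m}$ and $b:\mathbb{R}^d\to\mathbb{R}^d$ be bounded continuous functions and assume there exist constants $C>0$ and $\mu>0$ such that for every integer $N>e$ and all $x,y\in\mathbb{R}^d$ with $|x|,|y|\le N$, $$\|\sigma(x)-\sigma(y)\|\le C\sqrt{\log N}\,|x-y|+C\frac{\log N}{N^{\mu}},\qquad |b(x)-b(y)|\le C\log N\,|x-y|+C\frac{\log N}{N^{\mu}}.$$ Fix $x\in\mathbb{R}^d$ and $T>0$. For $h\in C_0([0,T],\mathbb{R}^m)$ with $e(h)<+\infty$, let $X_h$ be the unique solution of the ODE $\dot X_h(t)=\sigma(X_h(t))\dot h(t)+b(X_h(t))$, $X_h(0)=x$, and let $X_h^n$ be the solution of $\dot X^n_h(t)=\sigma(X^n_h(\phi_n(t)))\dot h(t)+b(X^n_h(\phi_n(t)))$, $X^n_h(0)=x$, where $\phi_n(t)=k2^{-n}$ for $t\in[k2^{-n},(k+1)2^{-n})$. Then for any $\alpha>0$, $$\lim_{n\to+\infty}\sup_{\{h:\,e(h)\le\alpha\}}\Big(\sup_{0\le t\le T}|X^n_h(t)-X_h(t)|\Big)=0.$$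
   Context: $C_0([0,T],\mathbb{R}^m)$ is the space of continuous functions $[0,T]\to\mathbb{R}^m$ vanishing at $0$. For $g\in C_0([0,T],\mathbb{R}^m)$, $e(g)=\int_0^T|\dot g(t)|^2dt$ if $g$ is absolutely continuous and $e(g)=+\infty$ otherwise. $|\cdot|$ is the Euclidean norm and $\|\sigma\|^2=\sum_{i,j}\sigma_{ij}^2$. *)

theory Defs
  imports "HOL-Analysis.Analysis"
begin

definition abs_continuous_on :: "real \<Rightarrow> real \<Rightarrow> (real \<Rightarrow> 'a::real_normed_vector) \<Rightarrow> bool" where
  "abs_continuous_on a b f \<longleftrightarrow>
     (\<forall>\<epsilon>>0. \<exists>\<delta>>0. \<forall>n::nat. \<forall>s t :: nat \<Rightarrow> real.
        (\<forall>i<n. a \<le> s i \<and> s i \<le> t i \<and> t i \<le> b) \<longrightarrow>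
        (\<forall>i<n. \<forall>j<n. i \<noteq> j \<longrightarrow> t i \<le> s j \<or> t j \<le> s i) \<longrightarrow>
        (\<Sum>i<n. t i - s i) < \<delta> \<longrightarrow>
        (\<Sum>i<n. norm (f (t i) - f (s i))) < \<epsilon>)"

definition C0 :: "real \<Rightarrow> (real \<Rightarrow> 'a::real_normed_vector) \<Rightarrow> bool" where
  "C0 T h \<longleftrightarrow> continuous_on {0..T} h \<and> h 0 = 0"

text \<open>Derivative of h (exists almost everywhere on [0,T] when h is absolutely continuous).\<close>
definition hdot :: "real \<Rightarrow> (real \<Rightarrow> 'a::real_normed_vector) \<Rightarrow> real \<Rightarrow> 'a" where
  "hdot T h t = vector_derivative h (at t within {0..T})"

definition energy :: "real \<Rightarrow> (real \<Rightarrow> 'a::real_normed_vector) \<Rightarrow> ennreal" where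
  "energy T h = (if abs_continuous_on 0 T h
      then (\<integral>\<^sup>+ t. ennreal ((norm (hdot T h t))\<^sup>2) \<partial>(lebesgue_on {0..T}))
      else \<infinity>)"

definition phi :: "nat \<Rightarrow> real \<Rightarrow> real" where
  "phi n t = real_of_int \<lfloor>t * 2 ^ n\<rfloor> / 2 ^ n"

text \<open>X solves X' = sigma(X) h' + b(X), X(0) = x on [0,T] (integral / Caratheodory sense).\<close>
definition solves_ode ::
  "(real^'d \<Rightarrow> real^'m^'d) \<Rightarrow> (real^'d \<Rightarrow> real^'d) \<Rightarrow> real^'d \<Rightarrow> real
    \<Rightarrow> (real \<Rightarrow> real^'m) \<Rightarrow> (real \<Rightarrow> real^'d) \<Rightarrow> bool" where
  "solves_ode \<sigma> b x T h X \<longleftrightarrow>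
     (\<forall>t\<in>{0..T}. ((\<lambda>s. \<sigma> (X s) *v hdot T h s + b (X s)) has_integral (X t - x)) {0..t})"

definition solves_euler ::
  "(real^'d \<Rightarrow> real^'m^'d) \<Rightarrow> (real^'d \<Rightarrow> real^'d) \<Rightarrow> real^'d \<Rightarrow> real \<Rightarrow> nat
    \<Rightarrow> (real \<Rightarrow> real^'m) \<Rightarrow> (real \<Rightarrow> real^'d) \<Rightarrow> bool" where
  "solves_euler \<sigma> b x T n h Y \<longleftrightarrow>
     (\<forall>t\<in>{0..T}. ((\<lambda>s. \<sigma> (Y (phi n s)) *v hdot T h s + b (Y (phi n s))) has_integral (Y t - x)) {0..t})"

end

theory Submission
  imports Defs
begin

text \<open>Let \<open>u = |X\<^sup>n\<^sub>h - X\<^sub>h|\<close> and measure time by the intrinsic clock \<open>A t = \<integral>\<^sub>0\<^sup>t (|h'| + 1)\<close>. By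
  Cauchy--Schwarz, \<open>A\<close> advances by at most \<open>sqrt (\<alpha> \<delta>) + \<delta>\<close> over any interval of length \<open>\<delta>\<close>,
  uniformly in \<open>h\<close> with \<open>e(h) \<le> \<alpha>\<close>; hence both solutions stay in a fixed ball, and the Euler scheme
  deviates from its own frozen values by an amount that tends to \<open>0\<close> uniformly in \<open>h\<close>.
  If \<open>u \<le> exp (- \<theta>)\<close> so far, using the regularity assumptions at radius \<open>N \<approx> exp (\<theta> / \<mu>)\<close>
  makes the coefficients Lipschitz with constant of order \<open>\<theta>\<close> up to an error \<open>exp (- \<theta>)\<close>, so over
  an interval where \<open>A\<close> advances by \<open>m\<close> the bound only weakens to \<open>u \<le> exp (- \<theta> exp (- c m))\<close>.
  Iterating over a fine grid gives \<open>u \<le> exp (- \<theta>\<^sub>0 exp (- c A T))\<close>, where \<open>exp (- \<theta>\<^sub>0)\<close> bounds the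
  discretisation error; this is below any \<open>\<epsilon>\<close> once \<open>n\<close> is large.\<close>

section \<open>Measurability of derivatives\<close>

text \<open>The energy is a Lebesgue integral of \<open>|hdot|\<^sup>2\<close>, so \<open>hdot\<close> has to be shown measurable. By the
  Cauchy criterion the points of differentiability form a Borel set, and there the derivative is
  a pointwise limit of difference quotients.\<close>

lemma has_vector_derivative_iff_difference_quotient:
  fixes f :: "real \<Rightarrow> 'a::real_normed_vector"
  shows "(f has_vector_derivative v) (at t within S) \<longleftrightarrow>
    ((\<lambda>y. (f y - f t) /\<^sub>R (y - t)) \<longlongrightarrow> v) (at t within S)"
proof -
  let ?F = "at t within S"
  have "\<forall>\<^sub>F y in ?F. norm ((1 / norm (y - t)) *\<^sub>R (f y - (f t + (y - t) *\<^sub>R v)))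
      = norm ((f y - f t) /\<^sub>R (y - t) - v)"
  proof (rule eventually_at_filter[THEN iffD2], intro always_eventually allI impI)
    fix y assume "y \<noteq> t"
    then have "(1 / (y - t)) *\<^sub>R ((y - t) *\<^sub>R v) = v"
      by simp
    then have "(f y - f t) /\<^sub>R (y - t) - v = (1 / (y - t)) *\<^sub>R (f y - (f t + (y - t) *\<^sub>R v))"
      by (simp add: algebra_simps divide_inverse_commute)
    then show "norm ((1 / norm (y - t)) *\<^sub>R (f y - (f t + (y - t) *\<^sub>R v))) = norm ((f y - f t) /\<^sub>R (y - t) - v)"
      by simp
  qed
  then have "((\<lambda>y. (1 / norm (y - t)) *\<^sub>R (f y - (f t + (y - t) *\<^sub>R v))) \<longlongrightarrow> 0) ?F \<longleftrightarrow>
      ((\<lambda>y. (f y - f t) /\<^sub>R (y - t) - v) \<longlongrightarrow> 0) ?F"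
    by (subst (1 2) tendsto_norm_zero_iff[symmetric]) (rule tendsto_cong)
  then show ?thesis
    unfolding has_vector_derivative_def has_derivative_within Lim_null[of _ v]
    by (simp add: bounded_linear_scaleR_left)
qed

definition difference_quotients_close ::
  "real set \<Rightarrow> (real \<Rightarrow> 'a::real_normed_vector) \<Rightarrow> real \<Rightarrow> real \<Rightarrow> real set" where
  "difference_quotients_close S f r e = {t\<in>S. \<forall>y\<in>S. \<forall>y'\<in>S.
      0 < \<bar>y - t\<bar> \<and> \<bar>y - t\<bar> < r \<and> 0 < \<bar>y' - t\<bar> \<and> \<bar>y' - t\<bar> < r \<longrightarrow>
      dist ((f y - f t) /\<^sub>R (y - t)) ((f y' - f t) /\<^sub>R (y' - t)) \<le> e}"

lemma closed_difference_quotients_close: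
  assumes "closed S" and f: "continuous_on S f"
  shows "closed (difference_quotients_close S f r e)" (is "closed ?E")
proof (rule closed_sequential_limits[THEN iffD2], intro allI impI, elim conjE)
  fix z l assume zE: "\<forall>n. z n \<in> ?E" and zl: "z \<longlonglongrightarrow> l"
  have zS: "z n \<in> S" for n
    using zE by (auto simp: difference_quotients_close_def)
  have lS: "l \<in> S"
    using closed_sequentially[OF \<open>closed S\<close> zS zl] by blast
  have fz: "(\<lambda>n. f (z n)) \<longlonglongrightarrow> f l"
    using f lS zS zl unfolding continuous_on_sequentially comp_def by blast
  show "l \<in> ?E" unfolding difference_quotients_close_def
  proof (simp only: mem_Collect_eq, intro conjI lS ballI impI, elim conjE)
    fix y y' assume yS: "y \<in> S" and y'S: "y' \<in> S"
      and 1: "0 < \<bar>y - l\<bar>" and 2: "\<bar>y - l\<bar> < r" and 3: "0 < \<bar>y' - l\<bar>" and 4: "\<bar>y' - l\<bar> < r"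
    have q: "(\<lambda>n. (f w - f (z n)) /\<^sub>R (w - z n)) \<longlonglongrightarrow> (f w - f l) /\<^sub>R (w - l)" if "w \<noteq> l" for w
      using that by (intro tendsto_intros fz zl) auto
    have ty: "(\<lambda>n. \<bar>y - z n\<bar>) \<longlonglongrightarrow> \<bar>y - l\<bar>" and ty': "(\<lambda>n. \<bar>y' - z n\<bar>) \<longlonglongrightarrow> \<bar>y' - l\<bar>"
      by (intro tendsto_intros zl)+
    have "\<forall>\<^sub>F n in sequentially. 0 < \<bar>y - z n\<bar> \<and> \<bar>y - z n\<bar> < r \<and> 0 < \<bar>y' - z n\<bar> \<and> \<bar>y' - z n\<bar> < r"
      using order_tendstoD(1)[OF ty 1] order_tendstoD(2)[OF ty 2]
        order_tendstoD(1)[OF ty' 3] order_tendstoD(2)[OF ty' 4]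
      by eventually_elim auto
    then have "\<forall>\<^sub>F n in sequentially.
        dist ((f y - f (z n)) /\<^sub>R (y - z n)) ((f y' - f (z n)) /\<^sub>R (y' - z n)) \<le> e"
      by eventually_elim (use zE yS y'S in \<open>auto simp: difference_quotients_close_def\<close>)
    moreover have "(\<lambda>n. dist ((f y - f (z n)) /\<^sub>R (y - z n)) ((f y' - f (z n)) /\<^sub>R (y' - z n)))
        \<longlonglongrightarrow> dist ((f y - f l) /\<^sub>R (y - l)) ((f y' - f l) /\<^sub>R (y' - l))"
      using 1 3 by (intro tendsto_dist q) auto
    ultimately show "dist ((f y - f l) /\<^sub>R (y - l)) ((f y' - f l) /\<^sub>R (y' - l)) \<le> e"
      using tendsto_upperbound by fastforce
  qed
qed

lemma differentiable_imp_difference_quotients_close: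
  fixes f :: "real \<Rightarrow> 'a::real_normed_vector"
  assumes t: "t \<in> S" and "f differentiable (at t within S)"
  shows "\<exists>k. t \<in> difference_quotients_close S f (1 / Suc k) (1 / Suc j)"
proof -
  let ?Q = "\<lambda>y. (f y - f t) /\<^sub>R (y - t)"
  obtain v where "(f has_vector_derivative v) (at t within S)"
    using assms vector_derivative_works by blast
  then have lim: "(?Q \<longlongrightarrow> v) (at t within S)"
    by (simp add: has_vector_derivative_iff_difference_quotient)
  have "(0::real) < 1 / (2 * Suc j)" by simp
  from lim[unfolded tendsto_iff, rule_format, OF this]
  obtain d where d: "d > 0" "\<forall>y\<in>S. y \<noteq> t \<and> dist y t < d \<longrightarrow> dist (?Q y) v < 1 / (2 * Suc j)"
    unfolding eventually_at by blast
  obtain k :: nat where k: "1 / Suc k < d"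
    using d(1) by (metis nat_approx_posE)
  have "t \<in> difference_quotients_close S f (1 / Suc k) (1 / Suc j)"
    unfolding difference_quotients_close_def
  proof (intro CollectI conjI t ballI impI, elim conjE)
    fix y y' assume "y \<in> S" "y' \<in> S"
      "0 < \<bar>y - t\<bar>" "\<bar>y - t\<bar> < 1 / Suc k" "0 < \<bar>y' - t\<bar>" "\<bar>y' - t\<bar> < 1 / Suc k"
    with d(2) k have "dist (?Q y) v < 1 / (2 * Suc j)" "dist (?Q y') v < 1 / (2 * Suc j)"
      by (auto simp: dist_real_def)
    then have "dist (?Q y) (?Q y') < 1 / (2 * Suc j) + 1 / (2 * Suc j)"
      by (smt (verit) dist_triangle2)
    then show "dist (?Q y) (?Q y') \<le> 1 / Suc j"
      by (simp add: field_simps)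
  qed
  then show ?thesis by blast
qed

lemma difference_quotients_close_imp_differentiable:
  fixes f :: "real \<Rightarrow> 'a::banach"
  assumes close: "\<forall>j. \<exists>k. t \<in> difference_quotients_close S f (1 / Suc k) (1 / Suc j)"
  shows "f differentiable (at t within S)"
proof -
  let ?Q = "\<lambda>y. (f y - f t) /\<^sub>R (y - t)"
  let ?F = "at t within S"
  have "\<exists>v. (?Q \<longlongrightarrow> v) ?F"
  proof (cases "?F = bot")
    case False
    have cauchy: "cauchy_filter (filtermap ?Q ?F)"
    proof (subst cauchy_filter_metric_filtermap, intro allI impI)
      fix e :: real assume "e > 0"
      then obtain j :: nat where j: "1 / Suc j < e" by (metis nat_approx_posE)
      from close obtain k :: nat where k: "t \<in> difference_quotients_close S f (1 / Suc k) (1 / Suc j)"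
        by blast
      let ?P = "\<lambda>y. y \<in> S \<and> 0 < \<bar>y - t\<bar> \<and> \<bar>y - t\<bar> < 1 / Suc k"
      have "eventually ?P ?F"
        unfolding eventually_at by (rule exI[of _ "1 / Suc k"]) (auto simp: dist_real_def)
      moreover have "\<forall>x y. ?P x \<and> ?P y \<longrightarrow> dist (?Q x) (?Q y) < e"
        using k j by (fastforce simp: difference_quotients_close_def)
      ultimately show "\<exists>P. eventually P ?F \<and> (\<forall>x y. P x \<and> P y \<longrightarrow> dist (?Q x) (?Q y) < e)"
        by blast
    qed
    moreover have "filtermap ?Q ?F \<noteq> bot" using False by (simp add: filtermap_bot_iff)
    ultimately obtain v where "filtermap ?Q ?F \<le> nhds v"
      using cauchy_filter_complete_converges[OF cauchy complete_UNIV] by auto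
    then show ?thesis by (auto simp: filterlim_def)
  qed simp
  then show ?thesis
    by (auto simp: has_vector_derivative_iff_difference_quotient[symmetric] intro: differentiableI_vector)
qed

lemma differentiable_points_eq_difference_quotients_close:
  fixes f :: "real \<Rightarrow> 'a::banach"
  shows "{t\<in>S. f differentiable (at t within S)} =
    (\<Inter>j. \<Union>k. difference_quotients_close S f (1 / Suc k) (1 / Suc j))"
proof (intro set_eqI iffI)
  fix t assume "t \<in> {t\<in>S. f differentiable (at t within S)}"
  then have "t \<in> S" and "f differentiable (at t within S)" by simp_all
  from differentiable_imp_difference_quotients_close[OF this]
  show "t \<in> (\<Inter>j. \<Union>k. difference_quotients_close S f (1 / Suc k) (1 / Suc j))" by blast
next
  fix t assume t: "t \<in> (\<Inter>j. \<Union>k. difference_quotients_close S f (1 / Suc k) (1 / Suc j))"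
  then have "t \<in> S" by (auto simp: difference_quotients_close_def)
  moreover have "f differentiable (at t within S)"
    using t by (intro difference_quotients_close_imp_differentiable) simp
  ultimately show "t \<in> {t\<in>S. f differentiable (at t within S)}" by blast
qed

definition inward_step :: "real \<Rightarrow> real \<Rightarrow> nat \<Rightarrow> real \<Rightarrow> real" where
  "inward_step a b k t = (if t \<le> (a + b) / 2 then 1 else -1) * ((b - a) / 2 / Suc k)"

lemma inward_step_in_interval:
  assumes "a < b" and t: "t \<in> {a..b}"
  shows "t + inward_step a b k t \<in> {a..b} - {t}"
proof -
  define s where "s = (b - a) / 2 / Suc k"
  have "0 < s" "s \<le> (b - a) / 2"
    using \<open>a < b\<close> by (auto simp: s_def field_simps mult_right_mono)
  moreover have "inward_step a b k t = (if t \<le> (a + b) / 2 then s else - s)"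
    unfolding inward_step_def s_def[symmetric] by simp
  ultimately show ?thesis using t by auto
qed

lemma tendsto_inward_difference_quotient:
  assumes "a < b" and t: "t \<in> {a..b}" and "f differentiable (at t within {a..b})"
  shows "(\<lambda>k. (f (t + inward_step a b k t) - f t) /\<^sub>R inward_step a b k t)
    \<longlonglongrightarrow> vector_derivative f (at t within {a..b})"
proof -
  have "(\<lambda>k. inward_step a b k t) \<longlonglongrightarrow> 0" unfolding inward_step_def
    by (intro tendsto_mult_right_zero LIMSEQ_Suc[OF lim_const_over_n])
  from tendsto_add[OF tendsto_const[of t] this]
  have "filterlim (\<lambda>k. t + inward_step a b k t) (at t within {a..b}) sequentially"
    unfolding filterlim_at using inward_step_in_interval[OF \<open>a < b\<close> t] by auto
  moreover have "(f has_vector_derivative vector_derivative f (at t within {a..b})) (at t within {a..b})"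
    using assms vector_derivative_works by blast
  ultimately show ?thesis
    using filterlim_compose[OF has_vector_derivative_iff_difference_quotient[THEN iffD1]] by fastforce
qed

lemma borel_measurable_vector_derivative_within_interval:
  fixes f :: "real \<Rightarrow> 'a::euclidean_space"
  assumes ab: "a < b" and f: "continuous_on {a..b} f"
  shows "(\<lambda>t. vector_derivative f (at t within {a..b})) \<in> borel_measurable (lebesgue_on {a..b})"
proof -
  let ?f' = "\<lambda>t. vector_derivative f (at t within {a..b})"
  define D where "D = {t\<in>{a..b}. f differentiable (at t within {a..b})}"
  have D: "D \<in> sets borel"
    unfolding D_def differentiable_points_eq_difference_quotients_close
    using closed_difference_quotients_close[OF closed_atLeastAtMost f]
    by (intro sets.countable_INT' sets.countable_UN' borel_closed) auto
  define c :: 'a where "c = (SOME v. False)"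
  have f'_junk: "?f' t = c" if "t \<notin> D" "t \<in> {a..b}" for t
  proof -
    have "\<not> (\<exists>v. (f has_vector_derivative v) (at t within {a..b}))"
      using that by (auto simp: D_def differentiableI_vector)
    then show ?thesis unfolding vector_derivative_def c_def by simp
  qed
  \<comment> \<open>Off \<open>D\<close> the derivative is the junk value \<open>c\<close>; on \<open>D\<close> it is a limit of difference quotients,
    which are Borel in \<open>t\<close> once \<open>f\<close> is extended continuously to \<open>\<real>\<close>.\<close>
  define fe where "fe t = f (max a (min b t))" for t
  have fe_cont: "continuous_on UNIV fe" unfolding fe_def
    by (rule continuous_on_compose2[OF f]) (auto intro!: continuous_intros simp: ab less_imp_le)
  define G where "G k t = (if t \<in> D
      then (fe (t + inward_step a b k t) - fe t) /\<^sub>R inward_step a b k t else c)" for k t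
  define F where "F t = (if t \<in> D then ?f' t else c)" for t
  have [measurable]: "fe \<in> borel_measurable borel" by (rule borel_measurable_continuous_onI[OF fe_cont])
  have [measurable]: "inward_step a b k \<in> borel_measurable borel" for k
    unfolding inward_step_def by measurable
  have G: "G k \<in> borel_measurable borel" for k
    unfolding G_def by (rule measurable_If_set) (use D in auto)
  have "(\<lambda>k. G k t) \<longlonglongrightarrow> F t" for t
  proof (cases "t \<in> D")
    case True
    then have t: "t \<in> {a..b}" and "f differentiable (at t within {a..b})" by (simp_all add: D_def)
    moreover have "G k t = (f (t + inward_step a b k t) - f t) /\<^sub>R inward_step a b k t" for k
      using True inward_step_in_interval[OF ab t, of k] t by (simp add: G_def fe_def)
    ultimately show ?thesis using True tendsto_inward_difference_quotient[OF ab] by (simp add: F_def)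
  qed (simp add: G_def F_def)
  then have "F \<in> borel_measurable borel"
    by (rule borel_measurable_LIMSEQ_metric[OF G])
  then have "F \<in> borel_measurable lebesgue"
    using measurable_completion measurable_lborel2 by metis
  then have "F \<in> borel_measurable (lebesgue_on {a..b})"
    by (rule measurable_restrict_space1)
  moreover have "F t = ?f' t" if "t \<in> space (lebesgue_on {a..b})" for t
    using f'_junk that by (auto simp: F_def)
  ultimately show ?thesis by (rule measurable_cong[THEN iffD1, rotated])
qed

lemma borel_measurable_hdot:
  fixes h :: "real \<Rightarrow> 'a::euclidean_space"
  assumes "T > 0" and "C0 T h"
  shows "hdot T h \<in> borel_measurable (lebesgue_on {0..T})"
proof -
  have "continuous_on {0..T} h" using \<open>C0 T h\<close> by (simp add: C0_def)
  from borel_measurable_vector_derivative_within_interval[OF \<open>T > 0\<close> this]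
  show ?thesis unfolding hdot_def[abs_def] .
qed

lemma energy_le_imp_square_integral_le:
  fixes h :: "real \<Rightarrow> 'a::euclidean_space"
  assumes T: "T > 0" and h: "C0 T h" and en: "energy T h \<le> ennreal \<alpha>" and \<alpha>: "0 \<le> \<alpha>"
  shows "(\<lambda>s. (norm (hdot T h s))\<^sup>2) integrable_on {0..T}"
    and "integral {0..T} (\<lambda>s. (norm (hdot T h s))\<^sup>2) \<le> \<alpha>"
proof -
  let ?M = "lebesgue_on {0..T}" and ?g = "\<lambda>s. (norm (hdot T h s))\<^sup>2"
  have g: "?g \<in> borel_measurable ?M"
    using borel_measurable_hdot[OF T h] by measurable
  have "abs_continuous_on 0 T h"
    using en by (auto simp: energy_def top_unique split: if_splits)
  then have nn: "(\<integral>\<^sup>+ t. ennreal (?g t) \<partial>?M) \<le> ennreal \<alpha>"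
    using en by (simp add: energy_def)
  have int: "integrable ?M ?g"
    using g nn by (intro integrableI_bounded) (simp_all add: order.strict_trans1)
  have "ennreal (integral\<^sup>L ?M ?g) \<le> ennreal \<alpha>"
    using nn nn_integral_eq_integral[OF int] by simp
  moreover have "(?g has_integral integral\<^sup>L ?M ?g) {0..T}"
    by (rule has_integral_integral_lebesgue_on[OF int]) auto
  ultimately show "?g integrable_on {0..T}" "integral {0..T} ?g \<le> \<alpha>"
    using \<alpha> by (auto simp: integral_unique ennreal_le_iff)
qed

text \<open>Cauchy--Schwarz, via \<open>2 k |g| \<le> |g|\<^sup>2 + k\<^sup>2\<close> with \<open>k = sqrt (\<alpha> / (b - a))\<close>.\<close>

lemma integral_norm_le_sqrt_integral_square:
  fixes g :: "real \<Rightarrow> 'a::euclidean_space"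
  assumes g: "g \<in> borel_measurable (lebesgue_on {a..b})"
    and g2: "(\<lambda>s. (norm (g s))\<^sup>2) integrable_on {a..b}"
    and g2_le: "integral {a..b} (\<lambda>s. (norm (g s))\<^sup>2) \<le> \<alpha>"
    and \<alpha>: "\<alpha> > 0" and ab: "a \<le> b"
  shows "(\<lambda>s. norm (g s)) integrable_on {a..b}"
    and "integral {a..b} (\<lambda>s. norm (g s)) \<le> sqrt ((b - a) * \<alpha>)"
proof -
  let ?f = "\<lambda>s. norm (g s)" and ?f2 = "\<lambda>s. (norm (g s))\<^sup>2"
  have "?f integrable_on {a..b} \<and> integral {a..b} ?f \<le> sqrt ((b - a) * \<alpha>)"
  proof (cases "a = b")
    case True
    then show ?thesis using has_integral_refl(2)[of ?f b] by (auto simp: integrable_on_def)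
  next
    case False
    then have ba: "b - a > 0" using ab by simp
    define k where "k = sqrt (\<alpha> / (b - a))"
    have k: "k > 0" and kk: "k * k = \<alpha> / (b - a)"
      using ba \<alpha> by (simp_all add: k_def)
    have kba: "k * (b - a) = sqrt ((b - a) * \<alpha>)"
    proof -
      have "(k * (b - a))\<^sup>2 = (b - a) * \<alpha>"
        using kk ba by (simp add: power2_eq_square field_simps)
      then show ?thesis using k ba by (simp add: real_sqrt_unique)
    qed
    have \<alpha>k: "\<alpha> / k = k * (b - a)"
      using kk k ba by (simp add: field_simps)
    let ?G = "\<lambda>s. (?f2 s / k + k) / 2"
    have G: "(?G has_integral ((integral {a..b} ?f2 / k + k * (b - a)) / 2)) {a..b}"
      using has_integral_const_real[of k a b] ab
      by (auto intro!: has_integral_divide has_integral_add integrable_integral g2 simp: mult.commute)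
    have f_le_G: "?f s \<le> ?G s" for s
    proof -
      have "0 \<le> (?f s - k)\<^sup>2" by simp
      then show ?thesis using k(1) by (simp add: field_simps power2_eq_square)
    qed
    have "?f \<in> borel_measurable (lebesgue_on {a..b})"
      using g by measurable
    then have f: "?f integrable_on {a..b}"
      by (rule measurable_bounded_by_integrable_imp_integrable_real[where g = ?G])
        (use G f_le_G in \<open>auto simp: has_integral_integrable\<close>)
    have "integral {a..b} ?f \<le> integral {a..b} ?G"
      by (rule integral_le[OF f]) (use G f_le_G in blast)+
    also have "\<dots> = (integral {a..b} ?f2 / k + k * (b - a)) / 2"
      using G by (rule integral_unique)
    also have "\<dots> \<le> (\<alpha> / k + k * (b - a)) / 2"
      using g2_le k(1) by (intro divide_right_mono add_right_mono) (auto simp: divide_le_cancel)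
    finally show ?thesis using f kba \<alpha>k by simp
  qed
  then show "?f integrable_on {a..b}" "integral {a..b} ?f \<le> sqrt ((b - a) * \<alpha>)" by auto
qed

lemma norm_hdot_integral_le:
  fixes h :: "real \<Rightarrow> 'a::euclidean_space"
  assumes T: "T > 0" and h: "C0 T h" and en: "energy T h \<le> ennreal \<alpha>" and \<alpha>: "\<alpha> > 0"
    and ab: "0 \<le> a" "a \<le> b" "b \<le> T"
  shows "(\<lambda>s. norm (hdot T h s)) integrable_on {a..b}"
    and "integral {a..b} (\<lambda>s. norm (hdot T h s)) \<le> sqrt ((b - a) * \<alpha>)"
proof -
  let ?f2 = "\<lambda>s. (norm (hdot T h s))\<^sup>2"
  have sub: "{a..b} \<subseteq> {0..T}" using ab by auto
  note f2 = energy_le_imp_square_integral_le[OF T h en less_imp_le[OF \<alpha>]]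
  have "hdot T h \<in> borel_measurable (lebesgue_on {a..b})"
    by (rule measurable_restrict_mono[OF borel_measurable_hdot[OF T h] sub])
  moreover have "?f2 integrable_on {a..b}"
    using integrable_on_subinterval[OF f2(1) sub] by simp
  moreover have "integral {a..b} ?f2 \<le> \<alpha>"
    using integral_subset_le[OF sub _ f2(1)] integrable_on_subinterval[OF f2(1) sub] f2(2) by simp
  ultimately show "(\<lambda>s. norm (hdot T h s)) integrable_on {a..b}"
    and "integral {a..b} (\<lambda>s. norm (hdot T h s)) \<le> sqrt ((b - a) * \<alpha>)"
    using integral_norm_le_sqrt_integral_square[OF _ _ _ \<alpha> ab(2)] by auto
qed

section \<open>Integral curves and the intrinsic clock\<close>

definition integral_curve :: "(real \<Rightarrow> 'a::banach) \<Rightarrow> 'a \<Rightarrow> real \<Rightarrow> (real \<Rightarrow> 'a) \<Rightarrow> bool" where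
  "integral_curve f x T Y \<longleftrightarrow> (\<forall>t\<in>{0..T}. (f has_integral (Y t - x)) {0..t})"

lemma solves_ode_iff_integral_curve:
  "solves_ode \<sigma> b x T h X \<longleftrightarrow> integral_curve (\<lambda>s. \<sigma> (X s) *v hdot T h s + b (X s)) x T X"
  by (simp add: solves_ode_def integral_curve_def)

lemma solves_euler_iff_integral_curve:
  "solves_euler \<sigma> b x T n h Y \<longleftrightarrow>
    integral_curve (\<lambda>s. \<sigma> (Y (phi n s)) *v hdot T h s + b (Y (phi n s))) x T Y"
  by (simp add: solves_euler_def integral_curve_def)

lemma integral_curve_diff:
  assumes "integral_curve f x T Y" and "integral_curve g z T Z"
  shows "integral_curve (\<lambda>s. f s - g s) (x - z) T (\<lambda>t. Y t - Z t)"
  using assms by (auto simp: integral_curve_def algebra_simps intro: has_integral_diff[THEN has_integral_eq_rhs])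

context
  fixes f :: "real \<Rightarrow> 'a::banach" and x T Y
  assumes curve: "integral_curve f x T Y" and T: "0 \<le> T"
begin

lemma integral_curve_integrable: "f integrable_on {0..T}"
  using curve T by (auto simp: integral_curve_def)

lemma integral_curve_start: "Y 0 = x"
proof -
  have "0 \<in> {0..T}" using T by simp
  then have "(f has_integral (Y 0 - x)) {0..0}" using curve unfolding integral_curve_def by blast
  then have "(f has_integral (Y 0 - x)) {0}" by simp
  from has_integral_unique[OF this has_integral_refl(2)] show ?thesis by simp
qed

lemma integral_curve_eq:
  assumes "t \<in> {0..T}"
  shows "Y t = x + integral {0..t} f"
proof -
  have "(f has_integral (Y t - x)) {0..t}" using curve assms by (simp add: integral_curve_def)
  then have "integral {0..t} f = Y t - x" by (rule integral_unique)
  then show ?thesis by simp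
qed

lemma integral_curve_increment:
  assumes "0 \<le> s" "s \<le> t" "t \<le> T"
  shows "Y t - Y s = integral {s..t} f"
proof -
  have "f integrable_on {0..t}"
    using integral_curve_integrable by (rule integrable_on_subinterval) (use assms in auto)
  then have "integral {0..s} f + integral {s..t} f = integral {0..t} f"
    using assms by (intro Henstock_Kurzweil_Integration.integral_combine) auto
  then show ?thesis
    using integral_curve_eq[of s] integral_curve_eq[of t] assms by (auto simp: algebra_simps)
qed

lemma continuous_on_integral_curve: "continuous_on {0..T} Y"
proof -
  have "continuous_on {0..T} (\<lambda>t. x + integral {0..t} f)"
    by (intro continuous_intros indefinite_integral_continuous_1 integral_curve_integrable)
  then show ?thesis
    by (rule continuous_on_eq) (simp add: integral_curve_eq)
qed

lemma integral_curve_increment_le: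
  assumes "0 \<le> s" "s \<le> t" "t \<le> T" and g: "g integrable_on {s..t}"
    and f_le: "\<And>r. r \<in> {s..t} \<Longrightarrow> norm (f r) \<le> g r"
  shows "norm (Y t - Y s) \<le> integral {s..t} g"
proof -
  have "f integrable_on {s..t}"
    using integral_curve_integrable by (rule integrable_on_subinterval) (use assms in auto)
  then have "norm (integral {s..t} f) \<le> integral {s..t} g"
    by (rule integral_norm_bound_integral[OF _ g f_le])
  then show ?thesis using integral_curve_increment[OF assms(1-3)] by simp
qed

end

definition intrinsic_time :: "real \<Rightarrow> (real \<Rightarrow> 'a::real_normed_vector) \<Rightarrow> real \<Rightarrow> real" where
  "intrinsic_time T h t = integral {0..t} (\<lambda>s. norm (hdot T h s) + 1)"

lemma intrinsic_time_0 [simp]: "intrinsic_time T h 0 = 0"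
  by (simp add: intrinsic_time_def)

context
  fixes T \<alpha> :: real and h :: "real \<Rightarrow> 'a::euclidean_space"
  assumes T: "T > 0" and h: "C0 T h" and en: "energy T h \<le> ennreal \<alpha>" and \<alpha>: "\<alpha> > 0"
begin

lemma intrinsic_time_rate_integral:
  assumes "0 \<le> s" "s \<le> t" "t \<le> T"
  shows "(\<lambda>r. norm (hdot T h r) + 1) integrable_on {s..t}"
    and "integral {s..t} (\<lambda>r. norm (hdot T h r) + 1) \<le> sqrt ((t - s) * \<alpha>) + (t - s)"
proof -
  note w = norm_hdot_integral_le[OF T h en \<alpha> assms]
  have I: "((\<lambda>r. norm (hdot T h r) + 1) has_integral
      (integral {s..t} (\<lambda>r. norm (hdot T h r)) + (t - s))) {s..t}"
    using has_integral_add[OF integrable_integral[OF w(1)] has_integral_const_real[of 1 s t]] assms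
    by simp
  then show "(\<lambda>r. norm (hdot T h r) + 1) integrable_on {s..t}" by blast
  show "integral {s..t} (\<lambda>r. norm (hdot T h r) + 1) \<le> sqrt ((t - s) * \<alpha>) + (t - s)"
    using integral_unique[OF I] w(2) by simp
qed

lemma intrinsic_time_diff:
  assumes "0 \<le> s" "s \<le> t" "t \<le> T"
  shows "intrinsic_time T h t - intrinsic_time T h s = integral {s..t} (\<lambda>r. norm (hdot T h r) + 1)"
  using Henstock_Kurzweil_Integration.integral_combine[OF assms(1,2)
      intrinsic_time_rate_integral(1)[of 0 t]] assms
  by (simp add: intrinsic_time_def)

lemma intrinsic_time_diff_le:
  assumes "0 \<le> s" "s \<le> t" "t \<le> T"
  shows "0 \<le> intrinsic_time T h t - intrinsic_time T h s"
    and "intrinsic_time T h t - intrinsic_time T h s \<le> sqrt ((t - s) * \<alpha>) + (t - s)"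
proof -
  note rate = intrinsic_time_rate_integral[OF assms]
  have "0 \<le> integral {s..t} (\<lambda>r. norm (hdot T h r) + 1)"
    by (rule integral_nonneg[OF rate(1)]) simp
  then show "0 \<le> intrinsic_time T h t - intrinsic_time T h s"
    and "intrinsic_time T h t - intrinsic_time T h s \<le> sqrt ((t - s) * \<alpha>) + (t - s)"
    using rate(2) intrinsic_time_diff[OF assms] by simp_all
qed

lemma integral_curve_increment_le_intrinsic_time:
  assumes curve: "integral_curve f x T Y"
    and st: "0 \<le> s" "s \<le> t" "t \<le> T"
    and f_le: "\<And>r. r \<in> {s..t} \<Longrightarrow> norm (f r) \<le> M * (norm (hdot T h r) + 1)"
  shows "norm (Y t - Y s) \<le> M * (intrinsic_time T h t - intrinsic_time T h s)"
proof -
  have "norm (Y t - Y s) \<le> integral {s..t} (\<lambda>r. M * (norm (hdot T h r) + 1))"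
    using integrable_on_mult_right[OF intrinsic_time_rate_integral(1)[OF st]] f_le st
    by (intro integral_curve_increment_le[OF curve]) auto
  then show ?thesis using intrinsic_time_diff[OF st] by simp
qed

end

lemma intrinsic_time_diff_uniformly_small:
  fixes \<alpha> m :: real
  assumes \<alpha>: "\<alpha> > 0" and m: "m > 0"
  obtains \<tau> where "\<tau> > 0"
    and "\<And>T (h :: real \<Rightarrow> 'a::euclidean_space) s t. T > 0 \<Longrightarrow> C0 T h \<Longrightarrow> energy T h \<le> ennreal \<alpha> \<Longrightarrow>
      0 \<le> s \<Longrightarrow> s \<le> t \<Longrightarrow> t \<le> T \<Longrightarrow> t - s \<le> \<tau> \<Longrightarrow>
      intrinsic_time T h t - intrinsic_time T h s \<le> m"
proof
  define \<tau> where "\<tau> = min (m / 2) (m\<^sup>2 / (4 * \<alpha>))"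
  show "\<tau> > 0" using assms by (simp add: \<tau>_def)
  have "\<tau> * \<alpha> \<le> (m / 2)\<^sup>2"
    using assms mult_right_mono[of \<tau> "m\<^sup>2 / (4 * \<alpha>)" \<alpha>]
    by (simp add: \<tau>_def power2_eq_square field_simps)
  then have "sqrt (\<tau> * \<alpha>) \<le> m / 2"
    using assms real_sqrt_le_mono by fastforce
  then have \<tau>_m: "sqrt (\<tau> * \<alpha>) + \<tau> \<le> m" by (simp add: \<tau>_def)
  fix T s t and h :: "real \<Rightarrow> 'a"
  assume "T > 0" "C0 T h" "energy T h \<le> ennreal \<alpha>" and st: "0 \<le> s" "s \<le> t" "t \<le> T" and "t - s \<le> \<tau>"
  then have "intrinsic_time T h t - intrinsic_time T h s \<le> sqrt ((t - s) * \<alpha>) + (t - s)"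
    using intrinsic_time_diff_le(2)[OF _ _ _ \<alpha> st] by blast
  also have "\<dots> \<le> sqrt (\<tau> * \<alpha>) + \<tau>"
    using \<open>t - s \<le> \<tau>\<close> \<alpha> by (simp add: add_mono mult_right_mono)
  finally show "intrinsic_time T h t - intrinsic_time T h s \<le> m" using \<tau>_m by linarith
qed

lemma norm_matrix_vector_mult_le:
  fixes A :: "real^'m^'d" and v :: "real^'m"
  shows "norm (A *v v) \<le> norm A * norm v"
proof -
  have "(norm (A *v v))\<^sup>2 = (\<Sum>i\<in>UNIV. (A $ i \<bullet> v)\<^sup>2)"
    by (simp add: norm_vec_def L2_set_def sum_nonneg matrix_vector_mult_def inner_vec_def)
  also have "\<dots> \<le> (\<Sum>i\<in>UNIV. (norm (A $ i))\<^sup>2 * (norm v)\<^sup>2)"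
  proof (rule sum_mono)
    fix i
    have "\<bar>A $ i \<bullet> v\<bar> \<le> norm (A $ i) * norm v" by (rule Cauchy_Schwarz_ineq2)
    then have "\<bar>A $ i \<bullet> v\<bar>\<^sup>2 \<le> (norm (A $ i) * norm v)\<^sup>2" by (rule power_mono) simp
    then show "(A $ i \<bullet> v)\<^sup>2 \<le> (norm (A $ i))\<^sup>2 * (norm v)\<^sup>2" by (simp add: power_mult_distrib)
  qed
  also have "\<dots> = (norm A * norm v)\<^sup>2"
    by (simp add: norm_vec_def L2_set_def sum_nonneg power_mult_distrib sum_distrib_right)
  finally show ?thesis
    by (rule power2_le_imp_le) simp
qed

lemma norm_vector_field_le:
  fixes A :: "real^'m^'d" and v :: "real^'m"
  assumes "norm A \<le> M" and "norm c \<le> M"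
  shows "norm (A *v v + c) \<le> M * (norm v + 1)"
proof -
  have "norm (A *v v + c) \<le> norm A * norm v + norm c"
    using norm_triangle_le norm_matrix_vector_mult_le add_right_mono by blast
  also have "\<dots> \<le> M * norm v + M"
    using assms by (intro add_mono mult_right_mono) auto
  finally show ?thesis by (simp add: algebra_simps)
qed

lemma vector_field_difference_le:
  fixes \<sigma> :: "real^'d \<Rightarrow> real^'m^'d" and b :: "real^'d \<Rightarrow> real^'d"
  assumes C: "0 \<le> C" and N: "1 \<le> ln N" and B: "1 / N powr \<mu> \<le> B"
    and \<sigma>: "norm (\<sigma> p - \<sigma> q) \<le> C * sqrt (ln N) * norm (p - q) + C * ln N / N powr \<mu>"
    and b: "norm (b p - b q) \<le> C * ln N * norm (p - q) + C * ln N / N powr \<mu>"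
  shows "norm ((\<sigma> p *v v + b p) - (\<sigma> q *v v + b q)) \<le> C * ln N * (norm (p - q) + B) * (norm v + 1)"
proof -
  have "C * ln N / N powr \<mu> \<le> C * ln N * B"
    using mult_left_mono[OF B, of "C * ln N"] C N by simp
  moreover have "sqrt (ln N) \<le> ln N"
    using N real_sqrt_le_mono[of "ln N" "ln N * ln N"] by (simp add: mult_le_cancel_left1)
  then have "C * sqrt (ln N) * norm (p - q) \<le> C * ln N * norm (p - q)"
    using C by (intro mult_right_mono mult_left_mono) auto
  ultimately have "norm (\<sigma> p - \<sigma> q) \<le> C * ln N * (norm (p - q) + B)"
    and "norm (b p - b q) \<le> C * ln N * (norm (p - q) + B)"
    using \<sigma> b by (simp_all add: algebra_simps)
  moreover have "(\<sigma> p *v v + b p) - (\<sigma> q *v v + b q) = (\<sigma> p - \<sigma> q) *v v + (b p - b q)"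
    by (simp add: matrix_vector_mult_diff_rdistrib)
  ultimately show ?thesis
    using norm_vector_field_le by metis
qed

text \<open>\<open>N \<approx> exp (\<theta> / \<mu>)\<close>: the error term \<open>N powr -\<mu>\<close> of the regularity assumptions is then
  \<open>exp (- \<theta>)\<close>, while \<open>ln N\<close> stays of order \<open>\<theta>\<close>.\<close>

lemma truncation_radius_exists:
  fixes \<mu> R \<theta> :: real
  assumes \<mu>: "\<mu> > 0" and R: "R \<ge> 0" and \<theta>: "\<theta> \<ge> \<mu> * (1 + ln (R + 3))"
  obtains N :: nat where "real N > exp 1" "R \<le> real N" "ln (real N) \<le> 2 * \<theta> / \<mu>"
    "1 / real N powr \<mu> \<le> exp (- \<theta>)"
proof
  define E where "E = exp (\<theta> / \<mu>)"
  define N where "N = nat \<lceil>E\<rceil>"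
  have l1: "\<theta> / \<mu> \<ge> 1 + ln (R + 3)" using \<theta> \<mu> by (simp add: field_simps)
  have "E \<ge> exp (1 + ln (R + 3))" unfolding E_def using l1 by simp
  also have "exp (1 + ln (R + 3)) = exp 1 * (R + 3)" using R by (simp add: exp_add)
  finally have E: "E \<ge> exp 1 * (R + 3)" .
  moreover have "R + 3 \<le> exp 1 * (R + 3)" "exp 1 < exp 1 * (R + 3)"
    using R mult_right_mono[of 1 "exp 1" "R + 3"] by simp_all
  ultimately have E3: "E \<ge> R + 3" and Ee: "E > exp 1" by linarith+
  have NE: "E \<le> real N" "real N \<le> E + 1" using E3 R unfolding N_def by linarith+
  show "real N > exp 1" "R \<le> real N" using NE Ee E3 by linarith+
  have "ln (real N) \<le> ln (2 * E)" using NE E3 R by (intro ln_mono) auto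
  also have "\<dots> = ln 2 + \<theta> / \<mu>" unfolding E_def by (simp add: ln_mult)
  also have "\<dots> \<le> 2 * \<theta> / \<mu>"
  proof -
    have "0 < ln (R + 3)" using R by simp
    moreover have "2 * \<theta> / \<mu> = \<theta> / \<mu> + \<theta> / \<mu>" by simp
    ultimately show ?thesis using ln_2_less_1 l1 by linarith
  qed
  finally show "ln (real N) \<le> 2 * \<theta> / \<mu>" .
  have "exp \<theta> = E powr \<mu>" unfolding E_def powr_def using \<mu> by simp
  also have "\<dots> \<le> real N powr \<mu>" using NE E3 R \<mu> by (intro powr_mono2) auto
  finally show "1 / real N powr \<mu> \<le> exp (- \<theta>)"
    by (simp add: exp_minus divide_inverse le_imp_inverse_le)
qed

section \<open>A Gronwall lemma with logarithmic Lipschitz constants\<close>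

lemma le_mult_exp_of_le_add:
  fixes B W x :: real
  assumes "B > 0" "0 \<le> x" "x \<le> 1 / 2" "W \<le> B + x * (W + 2 * B)"
  shows "W \<le> B * exp (6 * x)"
proof -
  have "W * (1 - x) \<le> B * (1 + 2 * x)" using assms(4) by (simp add: algebra_simps)
  also have "\<dots> \<le> B * ((1 + 6 * x) * (1 - x))"
  proof -
    have "0 \<le> x * (1 - 2 * x)" using assms(2,3) by simp
    then show ?thesis using assms(1) by (intro mult_left_mono) (simp_all add: algebra_simps)
  qed
  finally have "W \<le> B * (1 + 6 * x)" using assms(3) by (simp add: mult_le_cancel_right)
  also have "\<dots> \<le> B * exp (6 * x)" using assms(1) exp_ge_add_one_self[of "6 * x"] by simp
  finally show ?thesis .
qed

lemma half_le_one_minus_exp_neg: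
  fixes y :: real
  assumes "0 \<le> y" "y \<le> 1"
  shows "y / 2 \<le> 1 - exp (- y)"
proof -
  have "exp (- y) \<le> 1 / (1 + y)"
    using exp_ge_add_one_self[of y] assms by (simp add: exp_minus field_simps)
  moreover have "y / 2 \<le> 1 - 1 / (1 + y)"
    using assms mult_left_le[of y y] by (simp add: field_simps)
  ultimately show ?thesis by linarith
qed

text \<open>The Lipschitz constant \<open>\<kappa> \<theta>\<close> of the increment estimate is logarithmic in the error
  \<open>exp (- \<theta>)\<close>. For the maximum \<open>W\<close> of \<open>u\<close> on \<open>{a..b}\<close> it gives
  \<open>W \<le> exp (- \<theta>) + \<kappa> \<theta> m (W + 2 exp (- \<theta>))\<close>, which for \<open>\<kappa> \<theta> m \<le> 1/2\<close> solves to
  \<open>W \<le> exp (- \<theta> + 6 \<kappa> \<theta> m)\<close>.\<close>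

lemma log_lipschitz_gronwall_step:
  fixes u A :: "real \<Rightarrow> real"
  assumes \<kappa>: "\<kappa> > 0" and \<theta>: "\<theta> \<ge> 0" and ab: "a \<le> b"
    and u: "continuous_on {a..b} u" "\<And>r. r \<in> {a..b} \<Longrightarrow> 0 \<le> u r"
    and A: "\<And>s. s \<in> {a..b} \<Longrightarrow> A a \<le> A s \<and> A s \<le> A b"
    and small: "12 * \<kappa> * (A b - A a) \<le> 1" "2 * \<kappa> * \<theta> * (A b - A a) \<le> 1"
    and start: "u a \<le> exp (- \<theta>)"
    and incr: "\<And>s W. s \<in> {a..b} \<Longrightarrow> (\<forall>r\<in>{a..s}. u r \<le> W) \<Longrightarrow>
      u s \<le> u a + \<kappa> * \<theta> * (W + 2 * exp (- \<theta>)) * (A s - A a)"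
  shows "\<forall>s\<in>{a..b}. u s \<le> exp (- \<theta> * exp (- 12 * \<kappa> * (A b - A a)))"
proof -
  define B where "B = exp (- \<theta>)"
  define m where "m = A b - A a"
  define x where "x = \<kappa> * \<theta> * m"
  obtain s where s: "s \<in> {a..b}" and s_max: "\<And>r. r \<in> {a..b} \<Longrightarrow> u r \<le> u s"
    using continuous_attains_sup[OF compact_Icc _ u(1)] ab by auto
  have m: "0 \<le> m" using A[of b] ab by (simp add: m_def)
  have x: "0 \<le> x" "x \<le> 1 / 2"
    using \<kappa> \<theta> m small(2) by (simp_all add: x_def m_def)
  have "u s \<le> u a + \<kappa> * \<theta> * (u s + 2 * B) * (A s - A a)"
    using incr[OF s, of "u s"] s_max s by (auto simp: B_def)
  then have "u s \<le> B + \<kappa> * \<theta> * (u s + 2 * B) * (A s - A a)"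
    using start by (simp add: B_def)
  also have "\<dots> \<le> B + \<kappa> * \<theta> * (u s + 2 * B) * m"
    using A[OF s] \<kappa> \<theta> u(2)[OF s] by (intro add_left_mono mult_left_mono) (auto simp: m_def B_def)
  also have "\<dots> = B + x * (u s + 2 * B)" by (simp add: x_def)
  finally have "u s \<le> B * exp (6 * x)"
    by (rule le_mult_exp_of_le_add[rotated 3]) (use x in \<open>simp_all add: B_def\<close>)
  also have "6 * x = \<theta> * ((12 * \<kappa> * m) / 2)" by (simp add: x_def)
  also have "\<dots> \<le> \<theta> * (1 - exp (- (12 * \<kappa> * m)))"
    using half_le_one_minus_exp_neg[of "12 * \<kappa> * m"] \<kappa> m small(1) \<theta>
    by (intro mult_left_mono) (simp_all add: m_def)
  finally have "u s \<le> exp (- \<theta> * exp (- 12 * \<kappa> * m))"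
    by (simp add: B_def mult_exp_exp algebra_simps)
  then show ?thesis using s_max by (force simp: m_def)
qed

context
  fixes u A :: "real \<Rightarrow> real" and \<kappa> \<Lambda> T K :: real
  assumes \<kappa>: "\<kappa> > 0" and \<Lambda>: "\<Lambda> \<ge> 0" and T: "T \<ge> 0"
    and u: "continuous_on {0..T} u" "\<And>r. r \<in> {0..T} \<Longrightarrow> 0 \<le> u r" "u 0 = 0"
    and A: "A 0 = 0" "A T \<le> K" "\<And>s t. 0 \<le> s \<Longrightarrow> s \<le> t \<Longrightarrow> t \<le> T \<Longrightarrow> A s \<le> A t"
    and incr: "\<And>a s \<theta> W. 0 \<le> a \<Longrightarrow> a \<le> s \<Longrightarrow> s \<le> T \<Longrightarrow>
      \<Lambda> \<le> \<theta> \<Longrightarrow> \<theta> \<le> \<Lambda> * exp (12 * \<kappa> * K) \<Longrightarrow> (\<forall>r\<in>{a..s}. u r \<le> W) \<Longrightarrow>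
      u s \<le> u a + \<kappa> * \<theta> * (W + 2 * exp (- \<theta>)) * (A s - A a)"
begin

text \<open>The precision level \<open>\<Lambda> * exp (12 * \<kappa> * (K - A t))\<close> decays along the clock, but stays
  above \<open>\<Lambda>\<close> as long as \<open>A t \<le> K\<close>.\<close>

lemma log_lipschitz_gronwall_extend:
  assumes ab: "0 \<le> a" "a \<le> b" "b \<le> T"
    and small: "12 * \<kappa> * (A b - A a) \<le> 1" "2 * \<kappa> * (\<Lambda> * exp (12 * \<kappa> * K)) * (A b - A a) \<le> 1"
    and prev: "\<forall>s\<in>{0..a}. u s \<le> exp (- \<Lambda> * exp (12 * \<kappa> * (K - A a)))"
  shows "\<forall>s\<in>{0..b}. u s \<le> exp (- \<Lambda> * exp (12 * \<kappa> * (K - A b)))"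
proof -
  define \<theta> where "\<theta> = \<Lambda> * exp (12 * \<kappa> * (K - A a))"
  have Aa: "0 \<le> A a" "A a \<le> K" using A(1,2) A(3)[of 0 a] A(3)[of a T] ab by auto
  have m: "0 \<le> A b - A a" using A(3) ab by simp
  have \<theta>: "\<Lambda> \<le> \<theta>" "\<theta> \<le> \<Lambda> * exp (12 * \<kappa> * K)"
    using mult_left_mono[of 1 "exp (12 * \<kappa> * (K - A a))" \<Lambda>]
      mult_left_mono[of "exp (12 * \<kappa> * (K - A a))" "exp (12 * \<kappa> * K)" \<Lambda>] Aa \<kappa> \<Lambda>
    by (simp_all add: \<theta>_def)
  have "\<forall>s\<in>{a..b}. u s \<le> exp (- \<theta> * exp (- 12 * \<kappa> * (A b - A a)))"
  proof (rule log_lipschitz_gronwall_step[OF \<kappa> _ ab(2)])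
    show "0 \<le> \<theta>" using \<theta> \<Lambda> by simp
    show "continuous_on {a..b} u" using continuous_on_subset[OF u(1)] ab by auto
    show "0 \<le> u r" if "r \<in> {a..b}" for r using u(2) that ab by simp
    show "A a \<le> A s \<and> A s \<le> A b" if "s \<in> {a..b}" for s using A(3) that ab by simp
    show "12 * \<kappa> * (A b - A a) \<le> 1" by (fact small(1))
    have "2 * \<kappa> * \<theta> * (A b - A a) \<le> 2 * \<kappa> * (\<Lambda> * exp (12 * \<kappa> * K)) * (A b - A a)"
      using \<theta>(2) \<kappa> m by (intro mult_right_mono mult_left_mono) auto
    then show "2 * \<kappa> * \<theta> * (A b - A a) \<le> 1" using small(2) by linarith
    show "u a \<le> exp (- \<theta>)" using prev ab by (simp add: \<theta>_def)
    show "u s \<le> u a + \<kappa> * \<theta> * (W + 2 * exp (- \<theta>)) * (A s - A a)"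
      if "s \<in> {a..b}" "\<forall>r\<in>{a..s}. u r \<le> W" for s W
      using incr[of a s \<theta> W] that ab \<theta> by simp
  qed
  moreover have "\<theta> * exp (- 12 * \<kappa> * (A b - A a)) = \<Lambda> * exp (12 * \<kappa> * (K - A b))"
    by (simp add: \<theta>_def mult.assoc flip: exp_add) (simp add: algebra_simps)
  ultimately have new: "\<forall>s\<in>{a..b}. u s \<le> exp (- \<Lambda> * exp (12 * \<kappa> * (K - A b)))" by simp
  have "exp (- \<Lambda> * exp (12 * \<kappa> * (K - A a))) \<le> exp (- \<Lambda> * exp (12 * \<kappa> * (K - A b)))"
    using m \<kappa> \<Lambda> by (auto intro!: mult_left_mono)
  then have old: "\<forall>s\<in>{0..a}. u s \<le> exp (- \<Lambda> * exp (12 * \<kappa> * (K - A b)))"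
    using prev order.trans by blast
  show ?thesis
  proof
    fix s assume "s \<in> {0..b}"
    then show "u s \<le> exp (- \<Lambda> * exp (12 * \<kappa> * (K - A b)))" using new old by (cases "s \<le> a") auto
  qed
qed

lemma log_lipschitz_gronwall:
  assumes \<tau>: "\<tau> > 0"
    and small: "\<And>s t. 0 \<le> s \<Longrightarrow> s \<le> t \<Longrightarrow> t \<le> T \<Longrightarrow> t - s \<le> \<tau> \<Longrightarrow>
      12 * \<kappa> * (A t - A s) \<le> 1 \<and> 2 * \<kappa> * (\<Lambda> * exp (12 * \<kappa> * K)) * (A t - A s) \<le> 1"
  shows "\<forall>t\<in>{0..T}. u t \<le> exp (- \<Lambda>)"
proof -
  define g where "g i = min (real i * \<tau>) T" for i :: nat
  have "\<forall>s\<in>{0..g i}. u s \<le> exp (- \<Lambda> * exp (12 * \<kappa> * (K - A (g i))))" for i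
  proof (induction i)
    case 0
    then show ?case using u(3) T by (simp add: g_def)
  next
    case (Suc i)
    have ab: "0 \<le> g i" "g i \<le> g (Suc i)" "g (Suc i) \<le> T" and "g (Suc i) - g i \<le> \<tau>"
      using \<tau> T by (auto simp: g_def algebra_simps min_def)
    with small[OF ab] have "12 * \<kappa> * (A (g (Suc i)) - A (g i)) \<le> 1"
      and "2 * \<kappa> * (\<Lambda> * exp (12 * \<kappa> * K)) * (A (g (Suc i)) - A (g i)) \<le> 1"
      by simp_all
    from log_lipschitz_gronwall_extend[OF ab this Suc.IH] show ?case .
  qed
  moreover obtain i :: nat where "T / \<tau> \<le> i" using real_arch_simple by blast
  then have "g i = T" using \<tau> by (simp add: g_def field_simps)
  moreover have "exp (- \<Lambda> * exp (12 * \<kappa> * (K - A T))) \<le> exp (- \<Lambda>)"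
    using A(2) \<kappa> \<Lambda> mult_left_mono[of 1 "exp (12 * \<kappa> * (K - A T))" \<Lambda>] by simp
  ultimately show ?thesis by (metis order.trans)
qed

end

section \<open>The Euler scheme against the exact solution\<close>

lemma vector_field_curve_increment_le:
  fixes \<sigma> :: "real^'d \<Rightarrow> real^'m^'d" and b :: "real^'d \<Rightarrow> real^'d" and h :: "real \<Rightarrow> real^'m"
  assumes T: "T > 0" and h: "C0 T h" and en: "energy T h \<le> ennreal \<alpha>" and \<alpha>: "\<alpha> > 0"
    and M: "\<And>y. norm (\<sigma> y) \<le> M" "\<And>y. norm (b y) \<le> M"
    and curve: "integral_curve (\<lambda>s. \<sigma> (P s) *v hdot T h s + b (P s)) x T Y"
    and st: "0 \<le> s" "s \<le> t" "t \<le> T"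
  shows "norm (Y t - Y s) \<le> M * (sqrt ((t - s) * \<alpha>) + (t - s))"
proof -
  have "0 \<le> M" using M(1) order_trans[OF norm_ge_zero] by blast
  have "norm (Y t - Y s) \<le> M * (intrinsic_time T h t - intrinsic_time T h s)"
    using curve st norm_vector_field_le[OF M(1) M(2)]
    by (intro integral_curve_increment_le_intrinsic_time[OF T h en \<alpha>]) auto
  also have "\<dots> \<le> M * (sqrt ((t - s) * \<alpha>) + (t - s))"
    using intrinsic_time_diff_le(2)[OF T h en \<alpha> st] \<open>0 \<le> M\<close> by (rule mult_left_mono)
  finally show ?thesis .
qed

lemma vector_field_curve_norm_le:
  fixes \<sigma> :: "real^'d \<Rightarrow> real^'m^'d" and b :: "real^'d \<Rightarrow> real^'d" and h :: "real \<Rightarrow> real^'m"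
  assumes T: "T > 0" and h: "C0 T h" and en: "energy T h \<le> ennreal \<alpha>" and \<alpha>: "\<alpha> > 0"
    and M: "\<And>y. norm (\<sigma> y) \<le> M" "\<And>y. norm (b y) \<le> M"
    and curve: "integral_curve (\<lambda>s. \<sigma> (P s) *v hdot T h s + b (P s)) x T Y"
    and t: "t \<in> {0..T}"
  shows "norm (Y t) \<le> norm x + M * (sqrt (T * \<alpha>) + T)"
proof -
  have "0 \<le> M" using M(1) order_trans[OF norm_ge_zero] by blast
  then have "M * (sqrt ((t - 0) * \<alpha>) + (t - 0)) \<le> M * (sqrt (T * \<alpha>) + T)"
    using t \<alpha> by (auto intro!: mult_left_mono add_mono real_sqrt_le_mono)
  moreover have "Y 0 = x" using integral_curve_start[OF curve] T by simp
  ultimately show ?thesis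
    using vector_field_curve_increment_le[OF T h en \<alpha> M curve, of 0 t] t norm_triangle_sub[of "Y t" x]
    by auto
qed

lemma phi_le:
  assumes "0 \<le> r"
  shows "0 \<le> phi n r" and "phi n r \<le> r" and "r - phi n r \<le> 1 / 2 ^ n"
proof -
  have floor: "real_of_int \<lfloor>r * 2 ^ n\<rfloor> \<le> r * 2 ^ n" "r * 2 ^ n < real_of_int \<lfloor>r * 2 ^ n\<rfloor> + 1"
    by linarith+
  show "0 \<le> phi n r" using assms by (simp add: phi_def)
  show "phi n r \<le> r" using floor by (simp add: phi_def divide_le_eq)
  have "r - phi n r = (r * 2 ^ n - real_of_int \<lfloor>r * 2 ^ n\<rfloor>) / 2 ^ n"
    by (simp add: phi_def field_simps)
  also have "\<dots> \<le> 1 / 2 ^ n" using floor by (intro divide_right_mono) (linarith, simp)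
  finally show "r - phi n r \<le> 1 / 2 ^ n" .
qed

lemma euler_discretisation_error_le:
  fixes \<sigma> :: "real^'d \<Rightarrow> real^'m^'d" and b :: "real^'d \<Rightarrow> real^'d" and h :: "real \<Rightarrow> real^'m"
  assumes T: "T > 0" and h: "C0 T h" and en: "energy T h \<le> ennreal \<alpha>" and \<alpha>: "\<alpha> > 0"
    and M: "\<And>y. norm (\<sigma> y) \<le> M" "\<And>y. norm (b y) \<le> M"
    and curve: "integral_curve (\<lambda>s. \<sigma> (P s) *v hdot T h s + b (P s)) x T Y"
    and r: "r \<in> {0..T}"
  shows "norm (Y (phi n r) - Y r) \<le> M * (sqrt (\<alpha> / 2 ^ n) + 1 / 2 ^ n)"
proof -
  have "0 \<le> M" using M(1) order_trans[OF norm_ge_zero] by blast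
  have p: "0 \<le> phi n r" "phi n r \<le> r" "r - phi n r \<le> 1 / 2 ^ n" using phi_le[of r n] r by auto
  have "norm (Y (phi n r) - Y r) \<le> M * (sqrt ((r - phi n r) * \<alpha>) + (r - phi n r))"
    using vector_field_curve_increment_le[OF T h en \<alpha> M curve, of "phi n r" r] p r
    by (simp add: norm_minus_commute)
  also have "\<dots> \<le> M * (sqrt (\<alpha> / 2 ^ n) + 1 / 2 ^ n)"
    using p \<alpha> \<open>0 \<le> M\<close>
    by (intro mult_left_mono add_mono real_sqrt_le_mono)
      (auto simp: mult_right_mono[of _ "1 / 2 ^ n" \<alpha>, simplified])
  finally show ?thesis .
qed

context
  fixes \<sigma> :: "real^'d \<Rightarrow> real^'m^'d" and b :: "real^'d \<Rightarrow> real^'d"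
    and C \<mu> :: real
  assumes C: "C > 0" and \<mu>: "\<mu> > 0"
    and \<sigma>_reg: "\<And>(N::nat) y z. real N > exp 1 \<Longrightarrow> norm y \<le> real N \<Longrightarrow> norm z \<le> real N \<Longrightarrow>
        norm (\<sigma> y - \<sigma> z) \<le> C * sqrt (ln (real N)) * norm (y - z) + C * ln (real N) / real N powr \<mu>"
    and b_reg: "\<And>(N::nat) y z. real N > exp 1 \<Longrightarrow> norm y \<le> real N \<Longrightarrow> norm z \<le> real N \<Longrightarrow>
        norm (b y - b z) \<le> C * ln (real N) * norm (y - z) + C * ln (real N) / real N powr \<mu>"
begin

lemma vector_field_difference_le_at_level:
  assumes R: "0 \<le> R" and \<theta>: "\<theta> \<ge> \<mu> * (1 + ln (R + 3))"
    and pq: "norm p \<le> R" "norm q \<le> R"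
  shows "norm ((\<sigma> p *v v + b p) - (\<sigma> q *v v + b q))
    \<le> 2 * C / \<mu> * \<theta> * (norm (p - q) + exp (- \<theta>)) * (norm v + 1)"
proof -
  obtain N :: nat where N: "real N > exp 1" "R \<le> real N" "ln (real N) \<le> 2 * \<theta> / \<mu>"
    "1 / real N powr \<mu> \<le> exp (- \<theta>)"
    using truncation_radius_exists[OF \<mu> R \<theta>] .
  have lnN: "1 \<le> ln (real N)"
    using N(1) ln_mono[of "exp 1" "real N"] by simp
  have pN: "norm p \<le> real N" and qN: "norm q \<le> real N" using pq N(2) by auto
  have "norm ((\<sigma> p *v v + b p) - (\<sigma> q *v v + b q))
      \<le> C * ln N * (norm (p - q) + exp (- \<theta>)) * (norm v + 1)"
    using C lnN N(4) \<sigma>_reg[OF N(1) pN qN] b_reg[OF N(1) pN qN]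
    by (intro vector_field_difference_le) auto
  also have "\<dots> \<le> C * (2 * \<theta> / \<mu>) * (norm (p - q) + exp (- \<theta>)) * (norm v + 1)"
    using N(3) C by (intro mult_right_mono mult_left_mono) auto
  finally show ?thesis by (simp add: mult_ac)
qed

lemma euler_ode_gap_increment:
  fixes T \<alpha> R \<theta> W :: real and h :: "real \<Rightarrow> real^'m" and Y Z :: "real \<Rightarrow> real^'d"
  assumes T: "T > 0" and h: "C0 T h" and en: "energy T h \<le> ennreal \<alpha>" and \<alpha>: "\<alpha> > 0"
    and Y: "integral_curve (\<lambda>s. \<sigma> (Y (phi n s)) *v hdot T h s + b (Y (phi n s))) x T Y"
    and Z: "integral_curve (\<lambda>s. \<sigma> (Z s) *v hdot T h s + b (Z s)) x T Z"
    and R: "0 \<le> R" "\<And>t. t \<in> {0..T} \<Longrightarrow> norm (Y t) \<le> R \<and> norm (Z t) \<le> R"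
    and \<theta>: "\<theta> \<ge> \<mu> * (1 + ln (R + 3))"
    and discretisation: "\<And>r. r \<in> {0..T} \<Longrightarrow> norm (Y (phi n r) - Y r) \<le> exp (- \<theta>)"
    and as: "0 \<le> a" "a \<le> s" "s \<le> T" and W: "\<forall>r\<in>{a..s}. norm (Y r - Z r) \<le> W"
  shows "norm (Y s - Z s) \<le> norm (Y a - Z a) +
    2 * C / \<mu> * \<theta> * (W + 2 * exp (- \<theta>)) * (intrinsic_time T h s - intrinsic_time T h a)"
proof -
  have "0 < \<theta>" using \<theta> \<mu> R(1) by (smt (verit) ln_ge_zero mult_pos_pos)
  define L where "L = 2 * C / \<mu> * \<theta> * (W + 2 * exp (- \<theta>))"
  have "norm ((\<sigma> (Y (phi n r)) *v hdot T h r + b (Y (phi n r))) - (\<sigma> (Z r) *v hdot T h r + b (Z r)))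
      \<le> L * (norm (hdot T h r) + 1)" if r: "r \<in> {a..s}" for r
  proof -
    have rT: "r \<in> {0..T}" and pT: "phi n r \<in> {0..T}"
      using r as phi_le[of r n] by auto
    have "norm (Y (phi n r) - Z r) \<le> norm (Y (phi n r) - Y r) + norm (Y r - Z r)"
      by (rule norm_diff_triangle_le[OF order.refl order.refl])
    also have "\<dots> \<le> exp (- \<theta>) + W" using discretisation[OF rT] W r by (intro add_mono) auto
    finally have "norm (Y (phi n r) - Z r) + exp (- \<theta>) \<le> W + 2 * exp (- \<theta>)" by simp
    then have "(norm (Y (phi n r) - Z r) + exp (- \<theta>)) * (norm (hdot T h r) + 1)
        \<le> (W + 2 * exp (- \<theta>)) * (norm (hdot T h r) + 1)"
      by (rule mult_right_mono) simp
    then have "2 * C / \<mu> * \<theta> * (norm (Y (phi n r) - Z r) + exp (- \<theta>)) * (norm (hdot T h r) + 1)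
        \<le> L * (norm (hdot T h r) + 1)"
      using mult_left_mono[of _ _ "2 * C / \<mu> * \<theta>"] C \<mu> \<open>0 < \<theta>\<close> by (simp add: L_def mult.assoc)
    with vector_field_difference_le_at_level[OF R(1) \<theta>] R(2)[OF pT] R(2)[OF rT]
    show ?thesis by (meson order.trans)
  qed
  then have "norm ((Y s - Z s) - (Y a - Z a)) \<le> L * (intrinsic_time T h s - intrinsic_time T h a)"
    using integral_curve_diff[OF Y Z] as
    by (intro integral_curve_increment_le_intrinsic_time[OF T h en \<alpha>]) auto
  then show ?thesis
    using norm_triangle_sub[of "Y s - Z s" "Y a - Z a"] by (simp add: L_def)
qed

lemma euler_ode_gap_le:
  fixes T \<alpha> M \<Lambda> :: real and h :: "real \<Rightarrow> real^'m" and Y Z :: "real \<Rightarrow> real^'d"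
  defines "K \<equiv> sqrt (T * \<alpha>) + T"
  assumes T: "T > 0" and h: "C0 T h" and en: "energy T h \<le> ennreal \<alpha>" and \<alpha>: "\<alpha> > 0"
    and M: "\<And>y. norm (\<sigma> y) \<le> M" "\<And>y. norm (b y) \<le> M"
    and Y: "integral_curve (\<lambda>s. \<sigma> (Y (phi n s)) *v hdot T h s + b (Y (phi n s))) x T Y"
    and Z: "integral_curve (\<lambda>s. \<sigma> (Z s) *v hdot T h s + b (Z s)) x T Z"
    and \<Lambda>: "\<Lambda> \<ge> \<mu> * (1 + ln (norm x + M * K + 3))"
    and discretisation: "M * (sqrt (\<alpha> / 2 ^ n) + 1 / 2 ^ n) \<le> exp (- \<Lambda> * exp (24 * C / \<mu> * K))"
  shows "\<forall>t\<in>{0..T}. norm (Y t - Z t) \<le> exp (- \<Lambda>)"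
proof -
  define \<kappa> where "\<kappa> = 2 * C / \<mu>"
  define \<theta>\<^sub>0 where "\<theta>\<^sub>0 = \<Lambda> * exp (12 * \<kappa> * K)"
  define R where "R = norm x + M * K"
  have "0 \<le> M" using M(1) order_trans[OF norm_ge_zero] by blast
  have \<kappa>: "\<kappa> > 0" using C \<mu> by (simp add: \<kappa>_def)
  have R: "0 \<le> R" using \<open>0 \<le> M\<close> T \<alpha> by (simp add: R_def K_def)
  have "0 < \<mu> * (1 + ln (R + 3))" using \<mu> R by (simp add: add_pos_nonneg)
  then have "0 < \<Lambda>" using \<Lambda> by (simp add: R_def)
  have Y0: "Y 0 = x" and Z0: "Z 0 = x"
    using integral_curve_start[OF Y] integral_curve_start[OF Z] T by simp_all
  have bounded: "norm (Y t) \<le> R \<and> norm (Z t) \<le> R" if "t \<in> {0..T}" for t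
    using vector_field_curve_norm_le[OF T h en \<alpha> M Y that] vector_field_curve_norm_le[OF T h en \<alpha> M Z that]
    by (simp add: R_def K_def)
  have discretised: "norm (Y (phi n r) - Y r) \<le> exp (- \<theta>\<^sub>0)" if "r \<in> {0..T}" for r
    using order.trans[OF euler_discretisation_error_le[OF T h en \<alpha> M Y that] discretisation]
    by (simp add: \<theta>\<^sub>0_def \<kappa>_def)
  have "0 < min (1 / (12 * \<kappa>)) (1 / (2 * \<kappa> * \<theta>\<^sub>0))"
    using \<kappa> \<open>0 < \<Lambda>\<close> by (simp add: \<theta>\<^sub>0_def)
  from intrinsic_time_diff_uniformly_small[OF \<alpha> this]
  obtain \<tau> where \<tau>: "\<tau> > 0" and \<tau>_small: "\<And>s t. 0 \<le> s \<Longrightarrow> s \<le> t \<Longrightarrow> t \<le> T \<Longrightarrow> t - s \<le> \<tau> \<Longrightarrow>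
      intrinsic_time T h t - intrinsic_time T h s \<le> min (1 / (12 * \<kappa>)) (1 / (2 * \<kappa> * \<theta>\<^sub>0))"
    using T h en by metis
  note A_le = intrinsic_time_diff_le[OF T h en \<alpha>]
  show ?thesis
  proof (rule log_lipschitz_gronwall[where u = "\<lambda>t. norm (Y t - Z t)" and A = "intrinsic_time T h"
        and K = K and \<tau> = \<tau>, OF \<kappa> less_imp_le[OF \<open>0 < \<Lambda>\<close>] less_imp_le[OF T] _ _ _ _ _ _ _ \<tau>])
    show "continuous_on {0..T} (\<lambda>t. norm (Y t - Z t))"
      using T by (intro continuous_intros continuous_on_integral_curve[OF Y] continuous_on_integral_curve[OF Z]) auto
    show "norm (Y 0 - Z 0) = 0" using Y0 Z0 by simp
    show "intrinsic_time T h T \<le> K" using A_le(2)[of 0 T] T by (simp add: K_def)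
    show "intrinsic_time T h s \<le> intrinsic_time T h t" if "0 \<le> s" "s \<le> t" "t \<le> T" for s t
      using A_le(1)[OF that] by simp
    show "12 * \<kappa> * (intrinsic_time T h t - intrinsic_time T h s) \<le> 1 \<and>
        2 * \<kappa> * (\<Lambda> * exp (12 * \<kappa> * K)) * (intrinsic_time T h t - intrinsic_time T h s) \<le> 1"
      if "0 \<le> s" "s \<le> t" "t \<le> T" "t - s \<le> \<tau>" for s t
      using \<tau>_small[OF that] \<kappa> \<open>0 < \<Lambda>\<close> by (auto simp: \<theta>\<^sub>0_def field_simps)
    show "norm (Y s - Z s) \<le> norm (Y a - Z a) +
        \<kappa> * \<theta> * (W + 2 * exp (- \<theta>)) * (intrinsic_time T h s - intrinsic_time T h a)"
      if as: "0 \<le> a" "a \<le> s" "s \<le> T" and \<theta>: "\<Lambda> \<le> \<theta>" "\<theta> \<le> \<Lambda> * exp (12 * \<kappa> * K)"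
        and W: "\<forall>r\<in>{a..s}. norm (Y r - Z r) \<le> W" for a s \<theta> W
    proof -
      have "norm (Y (phi n r) - Y r) \<le> exp (- \<theta>)" if "r \<in> {0..T}" for r
        using discretised[OF that] \<theta>(2) by (simp add: \<theta>\<^sub>0_def order.trans)
      moreover have "\<mu> * (1 + ln (R + 3)) \<le> \<theta>" using \<Lambda> \<theta>(1) by (simp add: R_def)
      ultimately show ?thesis
        using euler_ode_gap_increment[OF T h en \<alpha> Y Z R bounded _ _ as W] by (simp add: \<kappa>_def)
    qed
  qed simp_all
qed

lemma euler_ode_gap_uniformly_small:
  fixes T \<alpha> M \<theta> :: real
  assumes T: "T > 0" and \<alpha>: "\<alpha> > 0" and M: "\<And>y. norm (\<sigma> y) \<le> M" "\<And>y. norm (b y) \<le> M"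
  shows "\<exists>N. \<forall>n\<ge>N. \<forall>(h :: real \<Rightarrow> real^'m) Y Z. C0 T h \<longrightarrow> energy T h \<le> ennreal \<alpha> \<longrightarrow>
    integral_curve (\<lambda>s. \<sigma> (Y (phi n s)) *v hdot T h s + b (Y (phi n s))) x T Y \<longrightarrow>
    integral_curve (\<lambda>s. \<sigma> (Z s) *v hdot T h s + b (Z s)) x T Z \<longrightarrow>
    (\<forall>t\<in>{0..T}. norm (Y t - Z t) \<le> exp (- \<theta>))"
proof -
  define K where "K = sqrt (T * \<alpha>) + T"
  define \<Lambda> where "\<Lambda> = max \<theta> (\<mu> * (1 + ln (norm x + M * K + 3)))"
  have "(\<lambda>n. M * (sqrt (\<alpha> / 2 ^ n) + 1 / 2 ^ n)) \<longlonglongrightarrow> M * (sqrt 0 + 0)"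
    by (intro tendsto_intros LIMSEQ_divide_realpow_zero) auto
  then have "\<forall>\<^sub>F n in sequentially.
      M * (sqrt (\<alpha> / 2 ^ n) + 1 / 2 ^ n) < exp (- \<Lambda> * exp (24 * C / \<mu> * K))"
    by (rule order_tendstoD) simp
  then obtain N where N: "\<And>n. n \<ge> N \<Longrightarrow>
      M * (sqrt (\<alpha> / 2 ^ n) + 1 / 2 ^ n) \<le> exp (- \<Lambda> * exp (24 * C / \<mu> * K))"
    unfolding eventually_sequentially by (meson less_imp_le)
  have "\<forall>t\<in>{0..T}. norm (Y t - Z t) \<le> exp (- \<theta>)"
    if "n \<ge> N" "C0 T h" "energy T h \<le> ennreal \<alpha>"
      "integral_curve (\<lambda>s. \<sigma> (Y (phi n s)) *v hdot T h s + b (Y (phi n s))) x T Y"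
      "integral_curve (\<lambda>s. \<sigma> (Z s) *v hdot T h s + b (Z s)) x T Z"
    for n and h :: "real \<Rightarrow> real^'m" and Y Z
  proof -
    have "\<forall>t\<in>{0..T}. norm (Y t - Z t) \<le> exp (- \<Lambda>)"
      by (rule euler_ode_gap_le[OF T that(2,3) \<alpha> M that(4,5)])
        (use N[OF that(1)] in \<open>simp_all add: \<Lambda>_def K_def\<close>)
    moreover have "exp (- \<Lambda>) \<le> exp (- \<theta>)" by (simp add: \<Lambda>_def)
    ultimately show ?thesis by (meson order.trans)
  qed
  then show ?thesis by blast
qed

end

theorem lemma3p4:
  fixes \<sigma> :: "real^'d \<Rightarrow> real^'m^'d" and b :: "real^'d \<Rightarrow> real^'d"
    and x :: "real^'d" and T :: real and C \<mu> \<alpha> :: real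
    and X :: "(real \<Rightarrow> real^'m) \<Rightarrow> real \<Rightarrow> real^'d"
    and Xn :: "nat \<Rightarrow> (real \<Rightarrow> real^'m) \<Rightarrow> real \<Rightarrow> real^'d"
  assumes \<sigma>_bdd: "bounded (range \<sigma>)" and \<sigma>_cont: "continuous_on UNIV \<sigma>"
    and b_bdd: "bounded (range b)" and b_cont: "continuous_on UNIV b"
    and C_pos: "C > 0" and \<mu>_pos: "\<mu> > 0"
    and \<sigma>_reg: "\<And>(N::nat) y z. real N > exp 1 \<Longrightarrow> norm y \<le> real N \<Longrightarrow> norm z \<le> real N \<Longrightarrow>
        norm (\<sigma> y - \<sigma> z) \<le> C * sqrt (ln (real N)) * norm (y - z) + C * ln (real N) / real N powr \<mu>"
    and b_reg: "\<And>(N::nat) y z. real N > exp 1 \<Longrightarrow> norm y \<le> real N \<Longrightarrow> norm z \<le> real N \<Longrightarrow>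
        norm (b y - b z) \<le> C * ln (real N) * norm (y - z) + C * ln (real N) / real N powr \<mu>"
    and T_pos: "T > 0" and \<alpha>_pos: "\<alpha> > 0"
    and X_sol: "\<And>h. C0 T h \<Longrightarrow> energy T h < \<infinity> \<Longrightarrow> solves_ode \<sigma> b x T h (X h)"
    and Xn_sol: "\<And>n h. C0 T h \<Longrightarrow> energy T h < \<infinity> \<Longrightarrow> solves_euler \<sigma> b x T n h (Xn n h)"
  shows "\<forall>\<epsilon>>0. \<exists>N. \<forall>n\<ge>N. \<forall>h. C0 T h \<and> energy T h \<le> ennreal \<alpha> \<longrightarrow>
            (\<forall>t\<in>{0..T}. norm (Xn n h t - X h t) \<le> \<epsilon>)"
proof (intro allI impI)
  fix \<epsilon> :: real assume "\<epsilon> > 0"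
  obtain M where M: "\<And>y. norm (\<sigma> y) \<le> M" "\<And>y. norm (b y) \<le> M"
    using \<sigma>_bdd b_bdd unfolding bounded_iff by (meson max.cobounded1 max.cobounded2 order_trans rangeI)
  obtain N where N: "\<forall>n\<ge>N. \<forall>(h :: real \<Rightarrow> real^'m) Y Z. C0 T h \<longrightarrow> energy T h \<le> ennreal \<alpha> \<longrightarrow>
      integral_curve (\<lambda>s. \<sigma> (Y (phi n s)) *v hdot T h s + b (Y (phi n s))) x T Y \<longrightarrow>
      integral_curve (\<lambda>s. \<sigma> (Z s) *v hdot T h s + b (Z s)) x T Z \<longrightarrow>
      (\<forall>t\<in>{0..T}. norm (Y t - Z t) \<le> exp (- (- ln \<epsilon>)))"
    using euler_ode_gap_uniformly_small[OF C_pos \<mu>_pos \<sigma>_reg b_reg T_pos \<alpha>_pos M] by blast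
  show "\<exists>N. \<forall>n\<ge>N. \<forall>h. C0 T h \<and> energy T h \<le> ennreal \<alpha> \<longrightarrow>
      (\<forall>t\<in>{0..T}. norm (Xn n h t - X h t) \<le> \<epsilon>)"
  proof (intro exI[of _ N] allI impI, elim conjE)
    fix n and h :: "real \<Rightarrow> real^'m"
    assume n: "n \<ge> N" and h: "C0 T h" and en: "energy T h \<le> ennreal \<alpha>"
    then have "energy T h < \<infinity>" by (simp add: order.strict_trans1)
    then have "integral_curve (\<lambda>s. \<sigma> (Xn n h (phi n s)) *v hdot T h s + b (Xn n h (phi n s))) x T (Xn n h)"
      and "integral_curve (\<lambda>s. \<sigma> (X h s) *v hdot T h s + b (X h s)) x T (X h)"
      using Xn_sol[OF h] X_sol[OF h]
      by (simp_all add: solves_euler_iff_integral_curve solves_ode_iff_integral_curve)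
    then show "\<forall>t\<in>{0..T}. norm (Xn n h t - X h t) \<le> \<epsilon>"
      using N[rule_format, OF n h en] \<open>\<epsilon> > 0\<close> by simp
  qed
qed

end
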